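(* Let $A=\mathbb C\langle u^{\pm1},v^{\pm1}\rangle$ and $c=uvu^{-1}v^{-1}$. For every $H\in A$, $\{c,H\}_K\equiv0\bmod[A,A]$; that is, $\pi(c)$ lies in the center of the bracket induced by $\{\cdot,\cdot\}_K$ on $A/[A,A]$.
   Context: $A$ is the group algebra over $\mathbb C$ of the free group on $u,v$; $[A,A]$ is the span of all $ab-ba$; $\pi:A\to A/[A,A]$ the projection. $\mu(a\otimes b)=ab$; $A\otimes A$ has componentwise multiplication. The double bracket $\llbracket\cdot\rrbracket_K:A\otimes A\to A\otimes A$ is the linear map with $\llbracket u\otimes v\rrbracket_K=-vu\otimes1$, $\llbracket v\otimes u\rrbracket_K=uv\otimes1$, $\llbracket u\otimes u\rrbracket_K=\llbracket v\otimes v\rrbracket_K=0$, extended (also to inverse letters) by the Leibniz rules $\llbracket a\otimes bc\rrbracket_K=\llbracket a\otimes b\rrbracket_K(1\otimes c)+(b\otimes1)\llbracket a\otimes c\rrbracket_K$ and $\llbracket ab\otimes c\rrbracket_K=\llbracket a\otimes c\rrbracket_K(b\otimes1)+(1\otimes a)\llbracket b\otimes c\rrbracket_K$. The bracket is $\{a,b\}_K=\mu(\llbracket a\otimes b\rrbracket_K)$. *)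

theory Defs
  imports Complex_Main "HOL-Library.Poly_Mapping" "HOL-Library.Product_Plus"
begin

datatype gen = U | V

type_synonym letter = "gen \<times> bool"   \<comment> \<open>(x, True) is x, (x, False) is x inverse\<close>

definition inv_letter :: "letter \<Rightarrow> letter" where
  "inv_letter l = (fst l, \<not> snd l)"

fun cancel :: "letter \<Rightarrow> letter list \<Rightarrow> letter list" where
  "cancel a [] = [a]"
| "cancel a (b # w) = (if b = inv_letter a then w else a # b # w)"

fun red :: "letter list \<Rightarrow> letter list" where
  "red [] = []"
| "red (a # w) = cancel a (red w)"

fun reduced :: "letter list \<Rightarrow> bool" where
  "reduced [] = True"
| "reduced [a] = True"
| "reduced (a # b # w) = (b \<noteq> inv_letter a \<and> reduced (b # w))"

lemma inv_inv_letter[simp]: "inv_letter (inv_letter a) = a"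
  by (simp add: inv_letter_def)

lemma inv_letter_neq[simp]: "inv_letter a \<noteq> a" "a \<noteq> inv_letter a"
  by (cases a, simp add: inv_letter_def)+

lemma reduced_tl: "reduced (a # w) \<Longrightarrow> reduced w"
  by (cases w) auto

lemma reduced_cancel: "reduced w \<Longrightarrow> reduced (cancel a w)"
proof (cases w)
  case Nil then show ?thesis by simp
next
  case (Cons b w')
  assume r: "reduced w"
  show ?thesis using r Cons by (auto intro: reduced_tl)
qed

lemma reduced_red: "reduced (red w)"
  by (induction w) (auto intro: reduced_cancel)

lemma red_reduced: "reduced w \<Longrightarrow> red w = w"
proof (induction w)
  case Nil then show ?case by simp
next
  case (Cons a w)
  then have "red w = w" by (auto intro: reduced_tl)
  then show ?case using Cons.prems by (cases w) auto
qed

lemma red_red[simp]: "red (red w) = red w"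
  using red_reduced reduced_red by blast

lemma red_append: "red (x @ y) = foldr cancel x (red y)"
  by (induction x) auto

lemma cancel_cancel_inv: "reduced s \<Longrightarrow> cancel a (cancel (inv_letter a) s) = s"
proof (cases s)
  case Nil then show ?thesis by simp
next
  case (Cons c s')
  assume r: "reduced s"
  show ?thesis
  proof (cases "c = a")
    case True
    then show ?thesis using r Cons by (cases s') auto
  next
    case False
    then show ?thesis using Cons by auto
  qed
qed

lemma reduced_foldr: "reduced r \<Longrightarrow> reduced (foldr cancel x r)"
  by (induction x) (auto intro: reduced_cancel)

lemma foldr_cancel_cancel:
  assumes "reduced w" "reduced r"
  shows "foldr cancel (cancel a w) r = cancel a (foldr cancel w r)"
proof (cases w)
  case Nil then show ?thesis by simp
next
  case (Cons b w')
  show ?thesis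
  proof (cases "b = inv_letter a")
    case True
    have "reduced (foldr cancel w' r)" using assms reduced_foldr by blast
    then show ?thesis using Cons True cancel_cancel_inv by simp
  next
    case False
    then show ?thesis using Cons by simp
  qed
qed

lemma foldr_red: "reduced r \<Longrightarrow> foldr cancel (red x) r = foldr cancel x r"
proof (induction x)
  case Nil then show ?case by simp
next
  case (Cons a x)
  have "foldr cancel (red (a # x)) r = foldr cancel (cancel a (red x)) r" by simp
  also have "\<dots> = cancel a (foldr cancel (red x) r)"
    using foldr_cancel_cancel reduced_red Cons.prems by blast
  also have "\<dots> = foldr cancel (a # x) r" using Cons by simp
  finally show ?case .
qed

lemma red_assoc1: "red (red x @ y) = red (x @ y)"
  by (simp add: red_append foldr_red reduced_red)

lemma red_assoc2: "red (x @ red y) = red (x @ y)"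
  by (simp add: red_append)

typedef fg = "{w. reduced w}"
  by (rule exI[of _ "[]"]) simp

setup_lifting type_definition_fg

instantiation fg :: monoid_add
begin
lift_definition zero_fg :: fg is "[]" by simp
lift_definition plus_fg :: "fg \<Rightarrow> fg \<Rightarrow> fg" is "\<lambda>x y. red (x @ y)"
  by (rule reduced_red)
instance
proof
  fix a b c :: fg
  show "a + b + c = a + (b + c)"
    by transfer (metis append_assoc red_assoc1 red_assoc2)
  show "0 + a = a" by transfer (simp add: red_reduced)
  show "a + 0 = a" by transfer (simp add: red_reduced)
qed
end

text \<open>The group operation of the free group is written additively (as the
  library's group algebra construction requires a monoid_add key type);
  it is nevertheless non-commutative.\<close>

lift_definition gen_fg :: "letter \<Rightarrow> fg" is "\<lambda>l. [l]" by simp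

type_synonym alg = "fg \<Rightarrow>\<^sub>0 complex"
type_synonym alg2 = "(fg \<times> fg) \<Rightarrow>\<^sub>0 complex"

definition scal :: "complex \<Rightarrow> ('k \<Rightarrow>\<^sub>0 complex) \<Rightarrow> ('k \<Rightarrow>\<^sub>0 complex)" where
  "scal z x = Poly_Mapping.map ((*) z) x"

definition elt :: "letter \<Rightarrow> alg" where
  "elt l = Poly_Mapping.single (gen_fg l) 1"

abbreviation u :: alg where "u \<equiv> elt (U, True)"
abbreviation v :: alg where "v \<equiv> elt (V, True)"
abbreviation u_inv :: alg where "u_inv \<equiv> elt (U, False)"
abbreviation v_inv :: alg where "v_inv \<equiv> elt (V, False)"

text \<open>Simple tensors: A \<otimes> A is identified with the group algebra of F \<times> F,
  with componentwise multiplication.\<close>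
definition tens :: "alg \<Rightarrow> alg \<Rightarrow> alg2" where
  "tens a b = (\<Sum>g\<in>Poly_Mapping.keys a. \<Sum>h\<in>Poly_Mapping.keys b.
      Poly_Mapping.single (g, h) (Poly_Mapping.lookup a g * Poly_Mapping.lookup b h))"

definition mu :: "alg2 \<Rightarrow> alg" where
  "mu T = (\<Sum>p\<in>Poly_Mapping.keys T. Poly_Mapping.single (fst p + snd p) (Poly_Mapping.lookup T p))"

inductive_set comm_span :: "alg set" where
  zero: "0 \<in> comm_span"
| comm: "a * b - b * a \<in> comm_span"
| add: "x \<in> comm_span \<Longrightarrow> y \<in> comm_span \<Longrightarrow> x + y \<in> comm_span"
| scal: "x \<in> comm_span \<Longrightarrow> scal z x \<in> comm_span"

definition is_double_bracket_K :: "(alg2 \<Rightarrow> alg2) \<Rightarrow> bool" where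
  "is_double_bracket_K B \<longleftrightarrow>
     (\<forall>x y. B (x + y) = B x + B y) \<and>
     (\<forall>z x. B (scal z x) = scal z (B x)) \<and>
     B (tens u v) = - tens (v * u) 1 \<and>
     B (tens v u) = tens (u * v) 1 \<and>
     B (tens u u) = 0 \<and>
     B (tens v v) = 0 \<and>
     (\<forall>a b c. B (tens a (b * c)) = B (tens a b) * tens 1 c + tens b 1 * B (tens a c)) \<and>
     (\<forall>a b c. B (tens (a * b) c) = B (tens a c) * tens b 1 + tens 1 a * B (tens b c))"

definition bracket :: "(alg2 \<Rightarrow> alg2) \<Rightarrow> alg \<Rightarrow> alg \<Rightarrow> alg" where
  "bracket B a b = mu (B (tens a b))"

end

theory Submission
  imports Defs
begin

text \<open>The map \<open>h \<mapsto> {c, h}\<^sub>K\<close> is a derivation of \<open>A\<close>, by the right Leibniz rule of the double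
  bracket. Peeling off the letters of \<open>c = u v u\<^sup>-\<^sup>1 v\<^sup>-\<^sup>1\<close> with the left Leibniz rule computes
  \<open>{c, u}\<^sub>K = c u - u c\<close> and \<open>{c, v}\<^sub>K = c v - v c\<close>, so this derivation agrees with the inner
  derivation \<open>[c, -]\<close> on the generators, hence on all group elements, and by linearity
  \<open>{c, H}\<^sub>K = c H - H c \<in> [A, A]\<close>.\<close>

lemma lookup_scal: "Poly_Mapping.lookup (scal z x) k = z * Poly_Mapping.lookup x k"
  by (simp add: scal_def map.rep_eq when_def)

lemma scal_add: "scal z (x + y) = scal z x + scal z y"
  by (rule poly_mapping_eqI) (simp add: lookup_scal lookup_add distrib_left)

lemma scal_single: "scal z (Poly_Mapping.single k c) = Poly_Mapping.single k (z * c)"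
  by (rule poly_mapping_eqI) (simp add: lookup_scal lookup_single when_def)

lemma poly_mapping_eq_sum_single:
  "(X :: 'a \<Rightarrow>\<^sub>0 'b::comm_monoid_add) =
     (\<Sum>k\<in>Poly_Mapping.keys X. Poly_Mapping.single k (Poly_Mapping.lookup X k))"
  by (rule poly_mapping_eqI) (simp add: lookup_sum lookup_single when_def in_keys_iff)

lemma additive_poly_mapping_eqI:
  fixes F G :: "('a \<Rightarrow>\<^sub>0 'b::comm_monoid_add) \<Rightarrow> 'c::ab_group_add"
  assumes F_add: "\<And>x y. F (x + y) = F x + F y" and G_add: "\<And>x y. G (x + y) = G x + G y"
    and single: "\<And>k c. F (Poly_Mapping.single k c) = G (Poly_Mapping.single k c)"
  shows "F X = G X"
proof -
  have F_zero: "F 0 = 0" and G_zero: "G 0 = 0"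
    using F_add[of 0 0] G_add[of 0 0] by simp_all
  have "F (\<Sum>k\<in>S. Poly_Mapping.single k (Poly_Mapping.lookup X k)) =
             G (\<Sum>k\<in>S. Poly_Mapping.single k (Poly_Mapping.lookup X k))" if "finite S" for S
    using that by (induction S rule: finite_induct) (simp_all add: F_zero G_zero F_add G_add single)
  then show ?thesis
    by (metis poly_mapping_eq_sum_single finite_keys)
qed

lemma tens_single:
  "tens (Poly_Mapping.single g x) (Poly_Mapping.single h y) = Poly_Mapping.single (g, h) (x * y)"
  by (cases "x = 0"; cases "y = 0") (simp_all add: tens_def)

lemma mu_single: "mu (Poly_Mapping.single p c) = Poly_Mapping.single (fst p + snd p) c"
  by (cases "c = 0") (simp_all add: mu_def)

lemma mu_add: "mu (X + Y) = mu X + mu Y"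
  unfolding mu_def by (rule setsum_keys_plus_distrib) (simp_all add: single_add)

lemma mu_zero: "mu 0 = 0"
  by (simp add: mu_def)

lemma mu_diff: "mu (X - Y) = mu X - mu Y"
  using mu_add[of "X - Y" Y] by (simp add: eq_diff_eq)

lemma mu_sum: "mu (\<Sum>i\<in>S. f i) = (\<Sum>i\<in>S. mu (f i))"
  by (induction S rule: infinite_finite_induct) (simp_all add: mu_zero mu_add)

lemma mu_scal: "mu (scal z X) = scal z (mu X)"
  by (rule additive_poly_mapping_eqI[where F = "\<lambda>X. mu (scal z X)" and G = "\<lambda>X. scal z (mu X)"])
     (simp_all only: scal_add mu_add scal_single mu_single)

lemma mu_mult_single_right:
  "mu (X * Poly_Mapping.single (0, g) 1) = mu X * Poly_Mapping.single g (1::complex)"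
  by (rule additive_poly_mapping_eqI[where F = "\<lambda>X. mu (X * Poly_Mapping.single (0, g) 1)"])
     (simp_all add: distrib_right mu_add mult_single mu_single add.assoc)

lemma mu_mult_single_left:
  "mu (Poly_Mapping.single (g, 0) 1 * X) = Poly_Mapping.single g (1::complex) * mu X"
  by (rule additive_poly_mapping_eqI[where F = "\<lambda>X. mu (Poly_Mapping.single (g, 0) 1 * X)"])
     (simp_all add: distrib_left mu_add mult_single mu_single add.assoc)

lemma comm_span_sum:
  "(\<And>i. i \<in> S \<Longrightarrow> f i \<in> comm_span) \<Longrightarrow> (\<Sum>i\<in>S. f i) \<in> comm_span"
  by (induction S rule: infinite_finite_induct) (simp_all add: comm_span.zero comm_span.add)

lemma Abs_fg_eq_sum_list: "reduced w \<Longrightarrow> Abs_fg w = sum_list (map gen_fg w)"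
proof (induction w)
  case Nil
  then show ?case by (simp add: zero_fg_def)
next
  case (Cons a w)
  from Cons.prems have "reduced w" by (rule reduced_tl)
  have "cancel a w = a # w"
    using Cons.prems by (cases w) auto
  then have "Rep_fg (gen_fg a + Abs_fg w) = a # w"
    using \<open>reduced w\<close> by (simp add: plus_fg.rep_eq gen_fg.rep_eq Abs_fg_inverse red_reduced)
  then have "Abs_fg (a # w) = gen_fg a + Abs_fg w"
    by (metis Rep_fg_inverse)
  then show ?case
    using Cons.IH[OF \<open>reduced w\<close>] by simp
qed

lemma fg_eq_sum_list_gen: "g = sum_list (map gen_fg (Rep_fg g))"
  using Abs_fg_eq_sum_list Rep_fg Rep_fg_inverse by (metis mem_Collect_eq)

lemma gen_fg_add_inverse: "gen_fg (x, b) + gen_fg (x, \<not> b) = 0"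
  by (rule Rep_fg_inject[THEN iffD1]) (simp add: plus_fg.rep_eq gen_fg.rep_eq zero_fg.rep_eq inv_letter_def)

lemma fg_derivation_eq_inner:
  fixes \<phi> D :: "fg \<Rightarrow> 'a::ring_1"
  assumes hom_zero: "\<phi> 0 = 1" and hom_add: "\<And>g h. \<phi> (g + h) = \<phi> g * \<phi> h"
    and leibniz: "\<And>g h. D (g + h) = D g * \<phi> h + \<phi> g * D h"
    and gens: "\<And>x. D (gen_fg (x, True)) = c * \<phi> (gen_fg (x, True)) - \<phi> (gen_fg (x, True)) * c"
  shows "D g = c * \<phi> g - \<phi> g * c"
proof -
  have D_zero: "D 0 = 0"
    using leibniz[of 0 0] by (simp add: hom_zero)
  have inverse: "D g' = c * \<phi> g' - \<phi> g' * c"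
    if inv: "g + g' = 0" "g' + g = 0" and Dg: "D g = c * \<phi> g - \<phi> g * c" for g g'
  proof -
    have l: "\<phi> g * \<phi> g' = 1" "\<phi> g' * \<phi> g = 1" "\<phi> g' * (\<phi> g * x) = x" for x
      using inv by (simp_all flip: hom_add mult.assoc add: hom_zero)
    have "0 = D g * \<phi> g' + \<phi> g * D g'"
      using leibniz[of g g'] inv by (simp add: D_zero)
    then have "\<phi> g * D g' = - (D g * \<phi> g')"
      by (simp add: eq_neg_iff_add_eq_0 add.commute)
    then have "D g' = - (\<phi> g' * D g * \<phi> g')"
      by (metis l(2) mult.assoc mult_1 mult_minus_right)
    also have "\<dots> = c * \<phi> g' - \<phi> g' * c"
      by (simp add: Dg right_diff_distrib left_diff_distrib mult.assoc l)
    finally show ?thesis .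
  qed
  have letter: "D (gen_fg l) = c * \<phi> (gen_fg l) - \<phi> (gen_fg l) * c" for l
  proof (cases l)
    case (Pair x b)
    then show ?thesis
      using inverse[OF gen_fg_add_inverse[of x True, simplified] gen_fg_add_inverse[of x False, simplified]] gens
      by (cases b) auto
  qed
  have "D (sum_list (map gen_fg w)) = c * \<phi> (sum_list (map gen_fg w)) - \<phi> (sum_list (map gen_fg w)) * c"
    for w
  proof (induction w)
    case (Cons l w)
    then show ?case
      by (simp add: leibniz hom_add letter algebra_simps flip: distrib_left)
  qed (simp add: D_zero hom_zero)
  then show ?thesis
    by (metis fg_eq_sum_list_gen)
qed

abbreviation of_fg :: "fg \<Rightarrow> alg" where
  "of_fg g \<equiv> Poly_Mapping.single g 1"

abbreviation of_fg2 :: "fg \<times> fg \<Rightarrow> alg2" where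
  "of_fg2 p \<equiv> Poly_Mapping.single p 1"

lemma of_fg2_mult: "of_fg2 p * of_fg2 q = of_fg2 (p + q)"
  by (simp add: mult_single)

lemma one_alg2: "(1 :: alg2) = of_fg2 (0, 0)"
  by (simp flip: zero_prod_def)

lemma tens_of_fg_one: "tens (of_fg g) 1 = of_fg2 (g, 0)"
  using tens_single[of g 1 0 1] by simp

lemma one_tens_of_fg: "tens 1 (of_fg g) = of_fg2 (0, g)"
  using tens_single[of 0 1 g 1] by simp

definition gu :: fg where "gu = gen_fg (U, True)"
definition gv :: fg where "gv = gen_fg (V, True)"
definition gu_inv :: fg where "gu_inv = gen_fg (U, False)"
definition gv_inv :: fg where "gv_inv = gen_fg (V, False)"

abbreviation gc :: fg where
  "gc \<equiv> gu + (gv + (gu_inv + gv_inv))"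

lemma generator_cancel [simp]:
  "gu + gu_inv = 0" "gu_inv + gu = 0" "gv + gv_inv = 0" "gv_inv + gv = 0"
  "gu + (gu_inv + g) = g" "gu_inv + (gu + g) = g" "gv + (gv_inv + g) = g" "gv_inv + (gv + g) = g"
  using gen_fg_add_inverse[of U True] gen_fg_add_inverse[of U False]
    gen_fg_add_inverse[of V True] gen_fg_add_inverse[of V False]
  by (simp_all add: gu_def gv_def gu_inv_def gv_inv_def flip: add.assoc)

lemma commutator_eq_of_fg: "u * v * u_inv * v_inv = of_fg gc"
  by (simp add: elt_def mult_single gu_def gv_def gu_inv_def gv_inv_def add.assoc)

locale double_bracket_K =
  fixes B :: "alg2 \<Rightarrow> alg2"
  assumes is_double_bracket_K: "is_double_bracket_K B"
begin

lemma B_add: "B (x + y) = B x + B y"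
  using is_double_bracket_K unfolding is_double_bracket_K_def by blast

lemma B_scal: "B (scal z x) = scal z (B x)"
  using is_double_bracket_K unfolding is_double_bracket_K_def by blast

lemma B_zero: "B 0 = 0"
  using B_add[of 0 0] by simp

lemma B_sum: "B (\<Sum>i\<in>S. f i) = (\<Sum>i\<in>S. B (f i))"
  by (induction S rule: infinite_finite_induct) (simp_all add: B_zero B_add)

lemma B_single_add_left:
  "B (of_fg2 (g + g', h)) = B (of_fg2 (g, h)) * of_fg2 (g', 0) + of_fg2 (0, g) * B (of_fg2 (g', h))"
proof -
  have "B (tens (of_fg g * of_fg g') (of_fg h)) =
      B (tens (of_fg g) (of_fg h)) * tens (of_fg g') 1 + tens 1 (of_fg g) * B (tens (of_fg g') (of_fg h))"
    using is_double_bracket_K unfolding is_double_bracket_K_def by blast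
  then show ?thesis
    by (simp only: mult_single mult_1 tens_single tens_of_fg_one one_tens_of_fg)
qed

lemma B_single_add_right:
  "B (of_fg2 (g, h + h')) = B (of_fg2 (g, h)) * of_fg2 (0, h') + of_fg2 (h, 0) * B (of_fg2 (g, h'))"
proof -
  have "B (tens (of_fg g) (of_fg h * of_fg h')) =
      B (tens (of_fg g) (of_fg h)) * tens 1 (of_fg h') + tens (of_fg h) 1 * B (tens (of_fg g) (of_fg h'))"
    using is_double_bracket_K unfolding is_double_bracket_K_def by blast
  then show ?thesis
    by (simp only: mult_single mult_1 tens_single tens_of_fg_one one_tens_of_fg)
qed

lemma B_single_zero_left: "B (of_fg2 (0, h)) = 0"
  using B_single_add_left[of 0 0 h] by (simp flip: one_alg2)

lemma B_single_inverse_left: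
  assumes "g + g' = 0" "g' + g = 0"
  shows "B (of_fg2 (g', h)) = - (of_fg2 (0, g') * B (of_fg2 (g, h)) * of_fg2 (g', 0))"
proof -
  have "0 = B (of_fg2 (g, h)) * of_fg2 (g', 0) + of_fg2 (0, g) * B (of_fg2 (g', h))"
    using B_single_add_left[of g g' h] assms by (simp add: B_single_zero_left)
  then have "0 = of_fg2 (0, g') * (B (of_fg2 (g, h)) * of_fg2 (g', 0) + of_fg2 (0, g) * B (of_fg2 (g', h)))"
    by simp
  also have "\<dots> = of_fg2 (0, g') * B (of_fg2 (g, h)) * of_fg2 (g', 0) + B (of_fg2 (g', h))"
    by (simp add: distrib_left of_fg2_mult assms(2) flip: mult.assoc one_alg2)
  finally have "0 = of_fg2 (0, g') * B (of_fg2 (g, h)) * of_fg2 (g', 0) + B (of_fg2 (g', h))" .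
  then show ?thesis
    by (simp add: eq_neg_iff_add_eq_0 add.commute)
qed

lemma B_generators:
  "B (of_fg2 (gu, gv)) = - of_fg2 (gv + gu, 0)" "B (of_fg2 (gv, gu)) = of_fg2 (gu + gv, 0)"
  "B (of_fg2 (gu, gu)) = 0" "B (of_fg2 (gv, gv)) = 0"
  using is_double_bracket_K unfolding is_double_bracket_K_def
  by (simp_all add: elt_def gu_def gv_def tens_single mult_single tens_of_fg_one)

lemma B_commutator_u: "B (of_fg2 (gc, gu)) = of_fg2 (gc, gu) - of_fg2 (gu, gc)"
proof -
  have u_inv: "B (of_fg2 (gu_inv, gu)) = 0"
    using B_single_inverse_left[of gu gu_inv gu] by (simp add: B_generators)
  have v_inv: "B (of_fg2 (gv_inv, gu)) = - of_fg2 (gu, gv_inv)"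
    using B_single_inverse_left[of gv gv_inv gu] by (simp add: B_generators of_fg2_mult add.assoc)
  show ?thesis
    using B_single_add_left[of gu "gv + (gu_inv + gv_inv)" gu] B_single_add_left[of gv "gu_inv + gv_inv" gu]
      B_single_add_left[of gu_inv gv_inv gu]
    by (simp add: u_inv v_inv B_generators of_fg2_mult add.assoc algebra_simps)
qed

lemma B_commutator_v: "B (of_fg2 (gc, gv)) = of_fg2 (0, gu + (gv + gu_inv)) - of_fg2 (gv + gc, 0)"
proof -
  have v_inv: "B (of_fg2 (gv_inv, gv)) = 0"
    using B_single_inverse_left[of gv gv_inv gv] by (simp add: B_generators)
  have u_inv: "B (of_fg2 (gu_inv, gv)) = of_fg2 (gv, gu_inv)"
    using B_single_inverse_left[of gu gu_inv gv] by (simp add: B_generators of_fg2_mult add.assoc)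
  show ?thesis
    using B_single_add_left[of gu "gv + (gu_inv + gv_inv)" gv] B_single_add_left[of gv "gu_inv + gv_inv" gv]
      B_single_add_left[of gu_inv gv_inv gv]
    by (simp add: u_inv v_inv B_generators of_fg2_mult add.assoc algebra_simps)
qed

lemma mu_B_commutator_single: "mu (B (of_fg2 (gc, h))) = of_fg gc * of_fg h - of_fg h * of_fg gc"
proof (rule fg_derivation_eq_inner[where D = "\<lambda>h. mu (B (of_fg2 (gc, h)))"])
  show "mu (B (of_fg2 (gc, g + h))) = mu (B (of_fg2 (gc, g))) * of_fg h + of_fg g * mu (B (of_fg2 (gc, h)))"
    for g h
    by (simp add: B_single_add_right mu_add mu_mult_single_right mu_mult_single_left)
  show "mu (B (of_fg2 (gc, gen_fg (x, True)))) =
      of_fg gc * of_fg (gen_fg (x, True)) - of_fg (gen_fg (x, True)) * of_fg gc" for x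
    by (cases x) (simp_all add: B_commutator_u B_commutator_v mu_diff mu_single mult_single add.assoc
        flip: gu_def gv_def)
qed (simp_all add: mult_single)

end

theorem mainTheorem6:
  fixes B :: "alg2 \<Rightarrow> alg2" and H :: alg
  assumes "is_double_bracket_K B"
  shows "bracket B (u * v * u_inv * v_inv) H \<in> comm_span"
proof -
  interpret double_bracket_K B
    by (rule double_bracket_K.intro) (fact assms)
  have "tens (of_fg gc) H =
      (\<Sum>h\<in>Poly_Mapping.keys H. scal (Poly_Mapping.lookup H h) (of_fg2 (gc, h)))"
    by (simp add: tens_def tens_single scal_single)
  then have "bracket B (u * v * u_inv * v_inv) H =
      (\<Sum>h\<in>Poly_Mapping.keys H. scal (Poly_Mapping.lookup H h) (of_fg gc * of_fg h - of_fg h * of_fg gc))"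
    unfolding bracket_def commutator_eq_of_fg by (simp add: B_sum mu_sum B_scal mu_scal mu_B_commutator_single)
  also have "\<dots> \<in> comm_span"
    by (rule comm_span_sum) (simp add: comm_span.comm comm_span.scal)
  finally show ?thesis .
qed

end
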